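(* Let $d\ge3$ and let $(X_{t,1},\dots,X_{t,d})$, $t=1,\dots,T$, be i.i.d. binary random vectors, each following a determinantal point process with correlation kernel $K_0$, where $K_0$ is real symmetric with all eigenvalues in $(0,1)$ and all entries nonzero. For a reference index $r\in\{1,\dots,d\}$, define the symmetric matrix estimator $\widehat{K}^{(r)}_T$ by: $\widehat{K}^{(r)}_{ii}=\frac1T\sum_t X_{t,i}$; for $i\ne j$, $\widehat{|K_{ij}|}=\sqrt{\widehat{K}^{(r)}_{ii}\widehat{K}^{(r)}_{jj}-\frac1T\sum_t X_{t,i}X_{t,j}}$; $\widehat{K}^{(r)}_{rj}=\widehat{K}^{(r)}_{jr}=\widehat{|K_{rj}|}$ for $j\neq r$; and for distinct $i,j\ne r$, $\widehat{K}^{(r)}_{ij}=\widehat{\mathrm{sgn}}^{(r)}_{ij}\,\widehat{|K_{ij}|}$ with $$\widehat{\mathrm{sgn}}^{(r)}_{ij}=\mathrm{sgn}\Big(\tfrac1T\textstyle\sum_t X_{t,r}X_{t,i}X_{t,j}-\widehat{K}^{(r)}_{rr}\widehat{K}^{(r)}_{ii}\widehat{K}^{(r)}_{jj}+\widehat{K}^{(r)}_{rr}\widehat{|K_{ij}|}^2+\widehat{K}^{(r)}_{ii}\widehat{|K_{rj}|}^2+\widehat{K}^{(r)}_{jj}\widehat{|K_{ri}|}^2\Big).$$ Then for any $r,r'\in\{1,\dots,d\}$, almost surely, for all $T$ large enough there exists a diagonal matrix $D$ with diagonal entries in $\{-1,1\}$ such that $\widehat{K}^{(r)}_T=D\,\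widehat{K}^{(r')}_T\,D$.
   Context: A binary random vector $(X_1,\dots,X_d)$ follows a determinantal point process with correlation kernel $K$ if $\mathbb{P}[X_j=1\ \forall j\in s]=\det K_s$ for all $s\subseteq\{1,\dots,d\}$, with $K_s$ the principal submatrix indexed by $s$. $\mathrm{sgn}(x)$ is $1,-1,0$ according as $x>0,x<0,x=0$. The estimator $\widehat{K}^{(r)}_T$ is the estimator obtained when variable $r$ is indexed as the first variable (its row is estimated as positive); on the event where its defining expressions are undefined it takes an arbitrary conventional value. *)

theory Defs
  imports "HOL-Probability.Probability" "Jordan_Normal_Form.Char_Poly" "Jordan_Normal_Form.DL_Submatrix"
begin

text \<open>Observations: x t i is the value of variable i (0-based, i < d) in sample t
 (0-based; the first T samples are t = 0, ..., T-1).\<close>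

definition mean_hat :: "(nat \<Rightarrow> nat \<Rightarrow> real) \<Rightarrow> nat \<Rightarrow> nat \<Rightarrow> real" where
  "mean_hat x T i = (1 / real T) * (\<Sum>t<T. x t i)"

definition abs_hat :: "(nat \<Rightarrow> nat \<Rightarrow> real) \<Rightarrow> nat \<Rightarrow> nat \<Rightarrow> nat \<Rightarrow> real" where
  "abs_hat x T i j = sqrt (mean_hat x T i * mean_hat x T j - (1 / real T) * (\<Sum>t<T. x t i * x t j))"

definition sgn_hat :: "(nat \<Rightarrow> nat \<Rightarrow> real) \<Rightarrow> nat \<Rightarrow> nat \<Rightarrow> nat \<Rightarrow> nat \<Rightarrow> real" where
  "sgn_hat x T r i j = sgn ((1 / real T) * (\<Sum>t<T. x t r * x t i * x t j)
      - mean_hat x T r * mean_hat x T i * mean_hat x T j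
      + mean_hat x T r * (abs_hat x T i j)^2
      + mean_hat x T i * (abs_hat x T r j)^2
      + mean_hat x T j * (abs_hat x T r i)^2)"

definition K_hat :: "nat \<Rightarrow> (nat \<Rightarrow> nat \<Rightarrow> real) \<Rightarrow> nat \<Rightarrow> nat \<Rightarrow> real mat" where
  "K_hat d x T r = mat d d (\<lambda>(i, j).
      if i = j then mean_hat x T i
      else if i = r \<or> j = r then abs_hat x T i j
      else sgn_hat x T r i j * abs_hat x T i j)"

end

theory Submission
  imports Defs
begin

(* By the strong law of large numbers (for bounded variables it follows from Hoeffding's
   inequality and Borel-Cantelli), almost surely every empirical inclusion frequency
   (1/T) sum_t prod_{j in s} X_{t,j} converges to the principal minor det K0_s. Hence
   |K_ij|^2 is estimated consistently, and the argument of the estimated sign of K_ij tends to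
   2 K0_ri K0_rj K0_ij, which is nonzero; so for large T the estimated sign is
   sgn K0_ri * sgn K0_rj * sgn K0_ij. Then K_hat^(r) = D_r C D_r with D_r = diag (sgn K0_ri)
   and a matrix C that does not depend on r, so K_hat^(r) = (D_r D_r') K_hat^(r') (D_r D_r').
   Besides symmetry only the nonvanishing of the entries of K0 and the positivity of its
   diagonal (a consequence of the marginals) are used. *)

lemma pick_sorted_nth:
  assumes "sorted_wrt (<) xs" "k < length xs"
  shows "pick (set xs) k = xs ! k"
proof -
  have "{a \<in> set xs. a < xs ! k} = set (take k xs)"
  proof (intro equalityI subsetI)
    fix a assume "a \<in> {a \<in> set xs. a < xs ! k}"
    then obtain l where "l < length xs" "a = xs ! l" "xs ! l < xs ! k" by (auto simp: in_set_conv_nth)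
    moreover have "l < k"
      using calculation assms by (metis linorder_neqE_nat less_asym sorted_wrt_nth_less)
    ultimately show "a \<in> set (take k xs)" by (auto simp: in_set_conv_nth)
  next
    fix a assume "a \<in> set (take k xs)"
    then obtain l where "l < k" "a = xs ! l" using assms by (auto simp: in_set_conv_nth)
    then show "a \<in> {a \<in> set xs. a < xs ! k}"
      using assms by (auto simp: sorted_wrt_nth_less)
  qed
  moreover have "card (set (take k xs)) = k"
    using assms by (simp add: distinct_card strict_sorted_iff)
  ultimately show ?thesis
    using pick_card_in_set[of "xs ! k" "set xs"] assms by simp
qed

lemma submatrix_sorted_list:
  assumes "K \<in> carrier_mat n n" "sorted_wrt (<) xs" "set xs \<subseteq> {..<n}"
  shows "submatrix K (set xs) (set xs) = mat (length xs) (length xs) (\<lambda>(i, j). K $$ (xs ! i, xs ! j))"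
proof -
  have "{i. i < n \<and> i \<in> set xs} = set xs" using assms(3) by auto
  moreover have "card (set xs) = length xs"
    using assms(2) by (simp add: distinct_card strict_sorted_iff)
  ultimately show ?thesis
    using assms by (auto simp: submatrix_def pick_sorted_nth intro!: cong_mat)
qed

lemma det_mat_1: "det (mat 1 1 f) = (f (0, 0) :: 'a :: comm_ring_1)"
  by (simp add: laplace_expansion_row[of _ 1 0] cofactor_def mat_delete_def det_def')

lemma det_mat_2: "det (mat 2 2 f) = (f (0, 0) * f (1, 1) - f (0, 1) * f (1, 0) :: 'a :: comm_ring_1)"
  by (simp add: laplace_expansion_row[of _ 2 0] cofactor_def mat_delete_def numeral_2_eq_2
      lessThan_Suc det_mat_1[unfolded One_nat_def])

lemma det_mat_3:
  "det (mat 3 3 f) = (f (0, 0) * f (1, 1) * f (2, 2) + f (0, 1) * f (1, 2) * f (2, 0)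
     + f (0, 2) * f (1, 0) * f (2, 1) - f (0, 0) * f (1, 2) * f (2, 1)
     - f (0, 1) * f (1, 0) * f (2, 2) - f (0, 2) * f (1, 1) * f (2, 0) :: 'a :: comm_ring_1)"
  by (simp add: laplace_expansion_row[of _ 3 0] cofactor_def mat_delete_def numeral_3_eq_3 numeral_2_eq_2
      lessThan_Suc det_mat_2[unfolded numeral_2_eq_2] algebra_simps)

lemma symmetric_mat_entry:
  assumes "K \<in> carrier_mat n n" "transpose_mat K = K" "i < n" "j < n"
  shows "K $$ (j, i) = K $$ (i, j)"
  by (metis assms carrier_matD index_transpose_mat(1))

lemma principal_minor_singleton:
  assumes "K \<in> carrier_mat n n" "a < n"
  shows "det (submatrix K {a} {a}) = (K $$ (a, a) :: 'a :: comm_ring_1)"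
  using submatrix_sorted_list[of K n "[a]"] assms by (simp add: det_mat_1[unfolded One_nat_def])

lemma principal_minor_pair:
  assumes K: "K \<in> carrier_mat n n" "transpose_mat K = K" and "a < n" "b < n" "a \<noteq> b"
  shows "det (submatrix K {a, b} {a, b}) = K $$ (a, a) * K $$ (b, b) - (K $$ (a, b))\<^sup>2"
proof -
  have sorted: "det (submatrix K {p, q} {p, q}) = K $$ (p, p) * K $$ (q, q) - (K $$ (p, q))\<^sup>2"
    if "p < q" "q < n" for p q :: nat
    using submatrix_sorted_list[OF K(1), of "[p, q]"] symmetric_mat_entry[OF K, of p q] that
    by (simp add: det_mat_2[unfolded numeral_2_eq_2] power2_eq_square)
  show ?thesis
  proof (cases "a < b")
    case True
    then show ?thesis using sorted assms by simp
  next
    case False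
    then show ?thesis
      using sorted[of b a] symmetric_mat_entry[OF K, of a b] assms
      by (simp add: insert_commute algebra_simps)
  qed
qed

lemma principal_minor_triple:
  assumes K: "K \<in> carrier_mat n n" "transpose_mat K = K"
    and "a < n" "b < n" "c < n" "a \<noteq> b" "b \<noteq> c" "a \<noteq> c"
  shows "det (submatrix K {a, b, c} {a, b, c}) = K $$ (a, a) * K $$ (b, b) * K $$ (c, c)
    + 2 * K $$ (a, b) * K $$ (b, c) * K $$ (a, c)
    - K $$ (a, a) * (K $$ (b, c))\<^sup>2 - K $$ (b, b) * (K $$ (a, c))\<^sup>2 - K $$ (c, c) * (K $$ (a, b))\<^sup>2"
proof -
  have sorted: "det (submatrix K {p, q, u} {p, q, u}) = K $$ (p, p) * K $$ (q, q) * K $$ (u, u)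
    + 2 * K $$ (p, q) * K $$ (q, u) * K $$ (p, u)
    - K $$ (p, p) * (K $$ (q, u))\<^sup>2 - K $$ (q, q) * (K $$ (p, u))\<^sup>2 - K $$ (u, u) * (K $$ (p, q))\<^sup>2"
    if "p < q" "q < u" "u < n" for p q u :: nat
    using submatrix_sorted_list[OF K(1), of "[p, q, u]"] that
      symmetric_mat_entry[OF K, of p q] symmetric_mat_entry[OF K, of p u]
      symmetric_mat_entry[OF K, of q u]
    by (simp add: det_mat_3[unfolded numeral_3_eq_3 numeral_2_eq_2] power2_eq_square algebra_simps)
  have sym: "K $$ (b, a) = K $$ (a, b)" "K $$ (c, a) = K $$ (a, c)" "K $$ (c, b) = K $$ (b, c)"
    using symmetric_mat_entry[OF K] assms by auto
  consider "a < b" "b < c" | "a < c" "c < b" | "b < a" "a < c"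
    | "b < c" "c < a" | "c < a" "a < b" | "c < b" "b < a"
    using assms by linarith
  then show ?thesis
  proof cases
    case 1 then show ?thesis using sorted assms by simp
  next
    case 2 then show ?thesis using sorted[of a c b] assms sym by (simp add: insert_commute algebra_simps)
  next
    case 3 then show ?thesis using sorted[of b a c] assms sym by (simp add: insert_commute algebra_simps)
  next
    case 4 then show ?thesis using sorted[of b c a] assms sym by (simp add: insert_commute algebra_simps)
  next
    case 5 then show ?thesis using sorted[of c a b] assms sym by (simp add: insert_commute algebra_simps)
  next
    case 6 then show ?thesis using sorted[of c b a] assms sym by (simp add: insert_commute algebra_simps)
  qed
qed

lemma prod_zero_one_eq_of_bool:
  fixes y :: "'b \<Rightarrow> 'a :: comm_semiring_1"
  assumes "finite s" "\<And>j. j \<in> s \<Longrightarrow> y j \<in> {0, 1}"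
  shows "(\<Prod>j\<in>s. y j) = of_bool (\<forall>j\<in>s. y j = 1)"
proof (cases "\<forall>j\<in>s. y j = 1")
  case False
  with assms(2) obtain j where "j \<in> s" "y j = 0" by blast
  with assms(1) have "(\<Prod>j\<in>s. y j) = 0" by (intro prod_zero) auto
  with False show ?thesis by simp
qed simp

definition empirical_moment :: "(nat \<Rightarrow> nat \<Rightarrow> real) \<Rightarrow> nat \<Rightarrow> nat set \<Rightarrow> real" where
  "empirical_moment x T s = (1 / real T) * (\<Sum>t<T. \<Prod>j\<in>s. x t j)"

context prob_space
begin

lemma AE_eventually_sample_mean_near:
  fixes Y :: "nat \<Rightarrow> 'a \<Rightarrow> real"
  assumes indep: "indep_vars (\<lambda>_. borel) Y UNIV"
    and bounded: "\<And>t \<omega>. \<omega> \<in> space M \<Longrightarrow> Y t \<omega> \<in> {0..1}"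
    and expectation: "\<And>t. expectation (Y t) = \<mu>"
    and e: "e > 0"
  shows "AE \<omega> in M. eventually (\<lambda>T. \<bar>(1 / real T) * (\<Sum>t<T. Y t \<omega>) - \<mu>\<bar> < e) sequentially"
proof -
  have [measurable]: "Y t \<in> borel_measurable M" for t
    using indep unfolding indep_vars_def by auto
  define A where "A n = {\<omega> \<in> space M. real n * e \<le> \<bar>(\<Sum>t<n. Y t \<omega>) - real n * \<mu>\<bar>}" for n
  have A_sets: "A n \<in> sets M" for n unfolding A_def by measurable
  have Hoeffding: "prob (A n) \<le> 2 * exp (-2 * e\<^sup>2) ^ n" for n
  proof (cases "n = 0")
    case True
    then show ?thesis by (simp add: order_trans[OF prob_le_1])
  next
    case False
    interpret Hoeffding_ineq M "{..<n}" Y "\<lambda>_. 0" "\<lambda>_. 1" "\<Sum>t<n. expectation (Y t)"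
    proof unfold_locales
      show "indep_vars (\<lambda>_. borel) Y {..<n}" by (rule indep_vars_subset[OF indep]) simp
    qed (use bounded in simp_all)
    have "prob (A n) \<le> 2 * exp (-2 * (real n * e)\<^sup>2 / (\<Sum>i<n. (1 - 0)\<^sup>2))"
      using Hoeffding_ineq_abs_ge[of "real n * e"] e False unfolding A_def expectation by simp
    also have "-2 * (real n * e)\<^sup>2 / (\<Sum>i<n. (1 - 0)\<^sup>2) = real n * (-2 * e\<^sup>2)"
      using False by (simp add: power2_eq_square)
    also have "exp (real n * (-2 * e\<^sup>2)) = exp (-2 * e\<^sup>2) ^ n"
      by (rule exp_of_nat_mult)
    finally show ?thesis .
  qed
  have "summable (\<lambda>n. prob (A n))"
  proof (rule summable_comparison_test')
    show "summable (\<lambda>n. 2 * exp (-2 * e\<^sup>2) ^ n)"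
      using e by (intro summable_mult summable_geometric) simp
  qed (use Hoeffding in simp)
  then have "AE \<omega> in M. eventually (\<lambda>n. \<omega> \<in> space M - A n) sequentially"
    by (intro borel_cantelli_AE1 A_sets) (simp_all add: less_top[symmetric])
  then show ?thesis
  proof (rule AE_mp, intro AE_I2 impI)
    fix \<omega> assume "eventually (\<lambda>n. \<omega> \<in> space M - A n) sequentially"
    with eventually_gt_at_top[of 0]
    show "eventually (\<lambda>T. \<bar>(1 / real T) * (\<Sum>t<T. Y t \<omega>) - \<mu>\<bar> < e) sequentially"
    proof eventually_elim
      case (elim n)
      then have "\<bar>(\<Sum>t<n. Y t \<omega>) - real n * \<mu>\<bar> < real n * e" unfolding A_def by auto
      moreover have "(1 / real n) * (\<Sum>t<n. Y t \<omega>) - \<mu> = ((\<Sum>t<n. Y t \<omega>) - real n * \<mu>) / real n"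
        using elim by (simp add: field_simps)
      ultimately show ?case using elim by (simp add: abs_div pos_divide_less_eq mult.commute)
    qed
  qed
qed

lemma AE_sample_mean_tendsto:
  fixes Y :: "nat \<Rightarrow> 'a \<Rightarrow> real"
  assumes "indep_vars (\<lambda>_. borel) Y UNIV"
    and "\<And>t \<omega>. \<omega> \<in> space M \<Longrightarrow> Y t \<omega> \<in> {0..1}"
    and "\<And>t. expectation (Y t) = \<mu>"
  shows "AE \<omega> in M. ((\<lambda>T. (1 / real T) * (\<Sum>t<T. Y t \<omega>)) \<longlongrightarrow> \<mu>) sequentially"
proof -
  have "AE \<omega> in M. \<forall>k. eventually (\<lambda>T. \<bar>(1 / real T) * (\<Sum>t<T. Y t \<omega>) - \<mu>\<bar> < 1 / real (Suc k))
      sequentially"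
    unfolding AE_all_countable by (intro allI AE_eventually_sample_mean_near assms) auto
  then show ?thesis
  proof (rule AE_mp, intro AE_I2 impI)
    fix \<omega>
    assume near: "\<forall>k. eventually (\<lambda>T. \<bar>(1 / real T) * (\<Sum>t<T. Y t \<omega>) - \<mu>\<bar> < 1 / real (Suc k))
      sequentially"
    show "((\<lambda>T. (1 / real T) * (\<Sum>t<T. Y t \<omega>)) \<longlongrightarrow> \<mu>) sequentially"
    proof (rule tendstoI)
      fix e :: real assume "e > 0"
      then obtain k where k: "1 / real (Suc k) < e" by (rule nat_approx_posE)
      show "eventually (\<lambda>T. dist ((1 / real T) * (\<Sum>t<T. Y t \<omega>)) \<mu> < e) sequentially"
        using near[rule_format, of k] by eventually_elim (use k in \<open>simp add: dist_real_def\<close>)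
    qed
  qed
qed

lemma AE_empirical_moment_tendsto:
  fixes X :: "nat \<Rightarrow> nat \<Rightarrow> 'a \<Rightarrow> real"
  assumes binary: "\<And>t i \<omega>. i < d \<Longrightarrow> \<omega> \<in> space M \<Longrightarrow> X t i \<omega> \<in> {0, 1}"
    and indep: "indep_vars (\<lambda>_. PiM {..<d} (\<lambda>_. borel)) (\<lambda>t \<omega>. \<lambda>i\<in>{..<d}. X t i \<omega>) UNIV"
    and inclusion: "\<And>t s. s \<subseteq> {..<d} \<Longrightarrow> prob {\<omega> \<in> space M. \<forall>j\<in>s. X t j \<omega> = 1} = p s"
  shows "AE \<omega> in M. \<forall>s\<in>Pow {..<d}.
           ((\<lambda>T. empirical_moment (\<lambda>t i. X t i \<omega>) T s) \<longlongrightarrow> p s) sequentially"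
proof (rule AE_ball_countable')
  fix s assume "s \<in> Pow {..<d}"
  then have s: "s \<subseteq> {..<d}" by simp
  have prod_eq_indicator: "(\<Prod>j\<in>s. X t j \<omega>) = indicator {\<omega> \<in> space M. \<forall>j\<in>s. X t j \<omega> = 1} \<omega>"
    if "\<omega> \<in> space M" for t \<omega>
  proof -
    have "(\<Prod>j\<in>s. X t j \<omega>) = of_bool (\<forall>j\<in>s. X t j \<omega> = 1)"
      using s that by (intro prod_zero_one_eq_of_bool finite_subset[OF s] binary) auto
    with that show ?thesis by (simp add: indicator_def)
  qed
  show "AE \<omega> in M. ((\<lambda>T. empirical_moment (\<lambda>t i. X t i \<omega>) T s) \<longlongrightarrow> p s) sequentially"
    unfolding empirical_moment_def
  proof (rule AE_sample_mean_tendsto)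
    have "indep_vars (\<lambda>_. borel) (\<lambda>t \<omega>. (\<lambda>v. \<Prod>j\<in>s. v j) (\<lambda>i\<in>{..<d}. X t i \<omega>)) UNIV"
    proof (rule indep_vars_compose2[OF indep])
      show "(\<lambda>v. \<Prod>j\<in>s. v j) \<in> borel_measurable (PiM {..<d} (\<lambda>_. borel :: real measure))"
        by (intro borel_measurable_prod measurable_component_singleton) (use s in auto)
    qed
    moreover have "(\<lambda>t \<omega>. (\<lambda>v. \<Prod>j\<in>s. v j) (\<lambda>i\<in>{..<d}. X t i \<omega>)) = (\<lambda>t \<omega>. \<Prod>j\<in>s. X t j \<omega>)"
      using s by (intro ext prod.cong) auto
    ultimately show "indep_vars (\<lambda>_. borel) (\<lambda>t \<omega>. \<Prod>j\<in>s. X t j \<omega>) UNIV" by simp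
    show "(\<Prod>j\<in>s. X t j \<omega>) \<in> {0..1}" if "\<omega> \<in> space M" for t \<omega>
      using prod_eq_indicator[OF that] by (simp add: indicator_def)
    show "expectation (\<lambda>\<omega>. \<Prod>j\<in>s. X t j \<omega>) = p s" for t
    proof -
      have "expectation (\<lambda>\<omega>. \<Prod>j\<in>s. X t j \<omega>)
          = expectation (indicator {\<omega> \<in> space M. \<forall>j\<in>s. X t j \<omega> = 1})"
        by (rule Bochner_Integration.integral_cong) (use prod_eq_indicator in auto)
      also have "\<dots> = prob {\<omega> \<in> space M. \<forall>j\<in>s. X t j \<omega> = 1}"
        by (simp add: Int_absorb2 subset_iff)
      finally show ?thesis using inclusion[OF s] by simp
    qed
  qed
qed (auto intro: countable_finite)

end

lemma index_mat_diag_conj: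
  assumes "C \<in> carrier_mat n n" "i < n" "j < n"
  shows "(mat_diag n f * C * mat_diag n f) $$ (i, j) = f i * C $$ (i, j) * f j"
  using assms by (simp add: mat_diag_mult_left[of _ n n] mat_diag_mult_right[of _ n n])

lemma mat_diag_conj_trans:
  fixes C :: "'a :: comm_ring_1 mat"
  assumes C: "C \<in> carrier_mat n n" and involutive: "\<And>i. i < n \<Longrightarrow> f i * f i = 1"
  shows "mat_diag n e * C * mat_diag n e
    = mat_diag n (\<lambda>i. e i * f i) * (mat_diag n f * C * mat_diag n f) * mat_diag n (\<lambda>i. e i * f i)"
    (is "?L = ?R")
proof (rule eq_matI)
  fix i j assume "i < dim_row ?R" "j < dim_col ?R"
  then have ij: "i < n" "j < n" by (simp_all add: mat_diag_def)
  have "e i * C $$ (i, j) * e j = (e i * f i) * (f i * C $$ (i, j) * f j) * (e j * f j)"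
    using involutive[OF ij(1)] involutive[OF ij(2)]
    by (metis (no_types, lifting) mult.assoc mult.commute mult.right_neutral)
  moreover have "mat_diag n f * C * mat_diag n f \<in> carrier_mat n n"
    using C by (metis mat_diag_dim mult_carrier_mat)
  ultimately show "?L $$ (i, j) = ?R $$ (i, j)"
    using C ij by (simp add: index_mat_diag_conj)
qed (simp_all add: mat_diag_def)

definition K_hat_signs_of :: "real mat \<Rightarrow> nat \<Rightarrow> (nat \<Rightarrow> nat \<Rightarrow> real) \<Rightarrow> nat \<Rightarrow> real mat" where
  "K_hat_signs_of K d x T = mat d d (\<lambda>(i, j).
      if i = j then mean_hat x T i else sgn (K $$ (i, j)) * abs_hat x T i j)"

lemma K_hat_eq_conj_signs_of:
  assumes K: "K \<in> carrier_mat d d" "transpose_mat K = K"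
    and r: "r < d" "0 < K $$ (r, r)" and nonzero: "\<And>i. i < d \<Longrightarrow> K $$ (r, i) \<noteq> 0"
    and signs: "\<And>i j. i < d \<Longrightarrow> j < d \<Longrightarrow> i \<noteq> j \<Longrightarrow> i \<noteq> r \<Longrightarrow> j \<noteq> r \<Longrightarrow>
      sgn_hat x T r i j = sgn (K $$ (r, i) * K $$ (r, j) * K $$ (i, j))"
  shows "K_hat d x T r
    = mat_diag d (\<lambda>i. sgn (K $$ (r, i))) * K_hat_signs_of K d x T * mat_diag d (\<lambda>i. sgn (K $$ (r, i)))"
    (is "_ = ?D * ?C * ?D")
proof -
  have C: "?C \<in> carrier_mat d d" by (simp add: K_hat_signs_of_def)
  show ?thesis
  proof (rule eq_matI)
    fix i j assume "i < dim_row (?D * ?C * ?D)" "j < dim_col (?D * ?C * ?D)"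
    then have ij: "i < d" "j < d" by (simp_all add: mat_diag_def)
    have "K_hat d x T r $$ (i, j) = sgn (K $$ (r, i)) * ?C $$ (i, j) * sgn (K $$ (r, j))"
      using ij r nonzero[OF ij(1)] nonzero[OF ij(2)] signs[OF ij] symmetric_mat_entry[OF K r(1) ij(1)]
        symmetric_mat_entry[OF K r(1) ij(2)]
      by (auto simp: K_hat_def K_hat_signs_of_def sgn_mult ac_simps)
    then show "K_hat d x T r $$ (i, j) = (?D * ?C * ?D) $$ (i, j)"
      using C ij by (simp add: index_mat_diag_conj)
  qed (simp_all add: K_hat_def mat_diag_def)
qed

lemma tendsto_imp_eventually_sgn_eq:
  fixes f :: "'b \<Rightarrow> real"
  assumes "(f \<longlongrightarrow> L) F" "L \<noteq> 0"
  shows "eventually (\<lambda>T. sgn (f T) = sgn L) F"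
proof (cases "L > 0")
  case True
  with order_tendstoD(1)[OF assms(1) True] show ?thesis by (auto elim: eventually_mono)
next
  case False
  with assms(2) have "L < 0" by simp
  with order_tendstoD(2)[OF assms(1) this] show ?thesis by (auto elim: eventually_mono)
qed

locale moment_limits =
  fixes d :: nat and K :: "real mat" and x :: "nat \<Rightarrow> nat \<Rightarrow> real"
  assumes carrier: "K \<in> carrier_mat d d"
    and symmetric: "transpose_mat K = K"
    and tendsto_minor:
      "\<And>s. s \<subseteq> {..<d} \<Longrightarrow> ((\<lambda>T. empirical_moment x T s) \<longlongrightarrow> det (submatrix K s s)) sequentially"
begin

lemma mean_hat_tendsto: "i < d \<Longrightarrow> ((\<lambda>T. mean_hat x T i) \<longlongrightarrow> K $$ (i, i)) sequentially"
  using tendsto_minor[of "{i}"] principal_minor_singleton[OF carrier]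
  by (simp add: mean_hat_def empirical_moment_def)

lemma abs_hat_squared_tendsto:
  assumes "i < d" "j < d" "i \<noteq> j"
  shows "((\<lambda>T. (abs_hat x T i j)\<^sup>2) \<longlongrightarrow> (K $$ (i, j))\<^sup>2) sequentially"
proof -
  have "((\<lambda>T. (1 / real T) * (\<Sum>t<T. x t i * x t j))
      \<longlongrightarrow> K $$ (i, i) * K $$ (j, j) - (K $$ (i, j))\<^sup>2) sequentially"
    using tendsto_minor[of "{i, j}"] principal_minor_pair[OF carrier symmetric] assms
    by (simp add: empirical_moment_def)
  then have "((\<lambda>T. \<bar>mean_hat x T i * mean_hat x T j - (1 / real T) * (\<Sum>t<T. x t i * x t j)\<bar>)
      \<longlongrightarrow> \<bar>K $$ (i, i) * K $$ (j, j) - (K $$ (i, i) * K $$ (j, j) - (K $$ (i, j))\<^sup>2)\<bar>) sequentially"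
    using assms by (intro tendsto_intros mean_hat_tendsto)
  (* HOL's sqrt is odd, so (sqrt y)^2 = |y| even when the estimate y is negative *)
  then show ?thesis by (simp add: abs_hat_def power2_eq_square)
qed

lemma eventually_sgn_hat_eq:
  assumes "r < d" "i < d" "j < d" "i \<noteq> j" "i \<noteq> r" "j \<noteq> r"
    and nonzero: "K $$ (r, i) * K $$ (r, j) * K $$ (i, j) \<noteq> 0"
  shows "eventually (\<lambda>T. sgn_hat x T r i j = sgn (K $$ (r, i) * K $$ (r, j) * K $$ (i, j))) sequentially"
proof -
  let ?minor = "K $$ (r, r) * K $$ (i, i) * K $$ (j, j) + 2 * K $$ (r, i) * K $$ (i, j) * K $$ (r, j)
      - K $$ (r, r) * (K $$ (i, j))\<^sup>2 - K $$ (i, i) * (K $$ (r, j))\<^sup>2 - K $$ (j, j) * (K $$ (r, i))\<^sup>2"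
  have "((\<lambda>T. (1 / real T) * (\<Sum>t<T. x t r * x t i * x t j)) \<longlongrightarrow> ?minor) sequentially"
    using tendsto_minor[of "{r, i, j}"] principal_minor_triple[OF carrier symmetric] assms
    by (simp add: empirical_moment_def mult.assoc)
  then have "((\<lambda>T. (1 / real T) * (\<Sum>t<T. x t r * x t i * x t j)
      - mean_hat x T r * mean_hat x T i * mean_hat x T j + mean_hat x T r * (abs_hat x T i j)\<^sup>2
      + mean_hat x T i * (abs_hat x T r j)\<^sup>2 + mean_hat x T j * (abs_hat x T r i)\<^sup>2)
      \<longlongrightarrow> ?minor - K $$ (r, r) * K $$ (i, i) * K $$ (j, j) + K $$ (r, r) * (K $$ (i, j))\<^sup>2
        + K $$ (i, i) * (K $$ (r, j))\<^sup>2 + K $$ (j, j) * (K $$ (r, i))\<^sup>2) sequentially"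
    by (intro tendsto_add tendsto_diff tendsto_mult mean_hat_tendsto abs_hat_squared_tendsto)
      (use assms in auto)
  also have "?minor - K $$ (r, r) * K $$ (i, i) * K $$ (j, j) + K $$ (r, r) * (K $$ (i, j))\<^sup>2
      + K $$ (i, i) * (K $$ (r, j))\<^sup>2 + K $$ (j, j) * (K $$ (r, i))\<^sup>2
      = 2 * (K $$ (r, i) * K $$ (r, j) * K $$ (i, j))"
    by (simp add: algebra_simps)
  finally show ?thesis
    unfolding sgn_hat_def using nonzero
    by (auto simp: sgn_mult dest: tendsto_imp_eventually_sgn_eq)
qed

lemma eventually_K_hat_eq_conj_signs_of:
  assumes r: "r < d" "0 < K $$ (r, r)"
    and nonzero: "\<And>i j. i < d \<Longrightarrow> j < d \<Longrightarrow> K $$ (i, j) \<noteq> 0"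
  shows "eventually (\<lambda>T. K_hat d x T r = mat_diag d (\<lambda>i. sgn (K $$ (r, i)))
    * K_hat_signs_of K d x T * mat_diag d (\<lambda>i. sgn (K $$ (r, i)))) sequentially"
proof -
  have "eventually (\<lambda>T. i \<noteq> j \<and> i \<noteq> r \<and> j \<noteq> r \<longrightarrow>
      sgn_hat x T r i j = sgn (K $$ (r, i) * K $$ (r, j) * K $$ (i, j))) sequentially"
    if "i < d" "j < d" for i j
  proof (cases "i \<noteq> j \<and> i \<noteq> r \<and> j \<noteq> r")
    case True
    with eventually_sgn_hat_eq[of r i j] that r nonzero show ?thesis
      by (auto elim: eventually_mono)
  qed auto
  then have "eventually (\<lambda>T. \<forall>i\<in>{..<d}. \<forall>j\<in>{..<d}. i \<noteq> j \<and> i \<noteq> r \<and> j \<noteq> r \<longrightarrow>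
      sgn_hat x T r i j = sgn (K $$ (r, i) * K $$ (r, j) * K $$ (i, j))) sequentially"
    by (intro eventually_ball_finite ballI) auto
  then show ?thesis
    by eventually_elim (intro K_hat_eq_conj_signs_of carrier symmetric r nonzero; auto)
qed

lemma eventually_K_hat_sign_equivalent:
  assumes refs: "r < d" "r' < d"
    and nonzero: "\<And>i j. i < d \<Longrightarrow> j < d \<Longrightarrow> K $$ (i, j) \<noteq> 0"
    and diagonal_pos: "\<And>i. i < d \<Longrightarrow> 0 < K $$ (i, i)"
  shows "eventually (\<lambda>T. \<exists>D. D \<in> carrier_mat d d \<and> diagonal_mat D \<and>
    (\<forall>i<d. D $$ (i, i) \<in> {-1, 1}) \<and> K_hat d x T r = D * K_hat d x T r' * D) sequentially"
proof -
  let ?s = "\<lambda>r i. sgn (K $$ (r, i))"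
  have signs: "?s r' i * ?s r' i = 1" "?s r i * ?s r' i \<in> {-1, 1}" if "i < d" for i
    using nonzero[OF refs(1) that] nonzero[OF refs(2) that] by (auto simp: sgn_if)
  have "eventually (\<lambda>T. K_hat d x T r = mat_diag d (?s r) * K_hat_signs_of K d x T * mat_diag d (?s r)
      \<and> K_hat d x T r' = mat_diag d (?s r') * K_hat_signs_of K d x T * mat_diag d (?s r'))
      sequentially"
    using refs diagonal_pos nonzero by (intro eventually_conj eventually_K_hat_eq_conj_signs_of) auto
  then show ?thesis
  proof eventually_elim
    case (elim T)
    show ?case
    proof (intro exI conjI)
      show "K_hat d x T r = mat_diag d (\<lambda>i. ?s r i * ?s r' i) * K_hat d x T r'
          * mat_diag d (\<lambda>i. ?s r i * ?s r' i)"
        using elim signs(1) by (simp add: mat_diag_conj_trans[of _ d] K_hat_signs_of_def)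
    qed (use signs(2) in \<open>auto simp: mat_diag_def diagonal_mat_def\<close>)
  qed
qed

end

theorem proposition6:
  fixes M :: "'a measure" and X :: "nat \<Rightarrow> nat \<Rightarrow> 'a \<Rightarrow> real"
    and K0 :: "real mat" and d r r' :: nat
  assumes "prob_space M"
    and "d \<ge> 3"
    and "K0 \<in> carrier_mat d d"
    and "transpose_mat K0 = K0"
    and "\<And>ev. eigenvalue K0 ev \<Longrightarrow> 0 < ev \<and> ev < 1"
    and "\<And>i j. i < d \<Longrightarrow> j < d \<Longrightarrow> K0 $$ (i, j) \<noteq> 0"
    and binary: "\<And>t i \<omega>. i < d \<Longrightarrow> \<omega> \<in> space M \<Longrightarrow> X t i \<omega> \<in> {0, 1}"
    and indep: "prob_space.indep_vars M (\<lambda>_. PiM {..<d} (\<lambda>_. borel))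
                  (\<lambda>t \<omega>. \<lambda>i\<in>{..<d}. X t i \<omega>) UNIV"
    and dpp: "\<And>t s. s \<subseteq> {..<d} \<Longrightarrow>
                measure M {\<omega> \<in> space M. \<forall>j\<in>s. X t j \<omega> = 1} = det (submatrix K0 s s)"
    and "r < d" and "r' < d"
  shows "AE \<omega> in M. eventually (\<lambda>T. \<exists>D. D \<in> carrier_mat d d \<and> diagonal_mat D \<and>
            (\<forall>i<d. D $$ (i, i) \<in> {-1, 1}) \<and>
            K_hat d (\<lambda>t i. X t i \<omega>) T r = D * K_hat d (\<lambda>t i. X t i \<omega>) T r' * D) sequentially"
proof -
  interpret prob_space M by fact
  note K0 = assms(3,4) and nonzero = assms(6) and refs = assms(10,11)
  have diagonal_pos: "0 < K0 $$ (i, i)" if "i < d" for i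
  proof -
    have "0 \<le> prob {\<omega> \<in> space M. \<forall>j\<in>{i}. X 0 j \<omega> = 1}" by simp
    also have "\<dots> = K0 $$ (i, i)"
      using dpp[of "{i}" 0] principal_minor_singleton[OF K0(1) that] that by simp
    finally show ?thesis using nonzero[OF that that] by simp
  qed
  have "AE \<omega> in M. \<forall>s\<in>Pow {..<d}.
      ((\<lambda>T. empirical_moment (\<lambda>t i. X t i \<omega>) T s) \<longlongrightarrow> det (submatrix K0 s s)) sequentially"
    using binary indep dpp by (rule AE_empirical_moment_tendsto)
  then show ?thesis
  proof (rule AE_mp, intro AE_I2 impI)
    fix \<omega>
    assume "\<forall>s\<in>Pow {..<d}.
      ((\<lambda>T. empirical_moment (\<lambda>t i. X t i \<omega>) T s) \<longlongrightarrow> det (submatrix K0 s s)) sequentially"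
    then interpret moment_limits d K0 "\<lambda>t i. X t i \<omega>"
      using K0 by unfold_locales auto
    show "eventually (\<lambda>T. \<exists>D. D \<in> carrier_mat d d \<and> diagonal_mat D \<and>
        (\<forall>i<d. D $$ (i, i) \<in> {-1, 1}) \<and>
        K_hat d (\<lambda>t i. X t i \<omega>) T r = D * K_hat d (\<lambda>t i. X t i \<omega>) T r' * D) sequentially"
      using refs nonzero diagonal_pos by (rule eventually_K_hat_sign_equivalent)
  qed
qed

end
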